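(* Let $G'$ be a divisible design graph on $n$ vertices whose spectrum consists of $k$ with multiplicity $1$, $\sqrt{k}$ with multiplicity $m$, $-1$ with multiplicity $k$, and $-\sqrt{k}$ with multiplicity $m$, so that $n=2m+k+1$. If $n$ divides $k^2-1$, then $G'$ is an antipodal distance-regular graph of diameter $3$ with intersection numbers $a_1=c_2=(k^2-1)/n$.
   Context: All graphs are finite, simple and undirected; eigenvalues of a graph are those of its adjacency matrix. A Deza graph with parameters $(n,k,b,a)$, where $b\geqslant a$, is a $k$-regular graph on $n$ vertices, which is neither complete nor edgeless, such that any two distinct vertices have exactly $b$ or exactly $a$ common neighbours. If $b>a$, the children $G_A$ and $G_B$ of $G$ are the graphs on the vertex set of $G$ in which two distinct vertices are adjacent if and only if they have exactly $a$ (for $G_A$), respectively exactly $b$ (for $G_B$), common neighbours in $G$. A divisible design graph is a Deza graph whose two children are, in some order, a complete multipartite graph with at least two parts, all of the same size at least $2$, and its complement (a disjoint union of at least two cliques of equal size). A connected graph $G=(V,E)$ of diameter $d$ is distance-regular if there are numbers $a_i,b_i,c_i$ ($0\leqslant i\leqslant d$), its intersection numbers, such that for all $x,y\in V$ at distance $i$, the vertex $y$ has exactly $b_i$ neighbours at distance $i+1$ from $x$, $a_i$ neighbours at distance $i$ from $x$, and $c_i$ neighbours at distance $i-1$ from $x$. A distance-regular graph of diameter $d$ is antipodal if the graph on $V$ in which two vertices are adjacent iff they are at distance $d$ is a disjoint union of cliques. *)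

theory Defs
  imports "Jordan_Normal_Form.Char_Poly" "HOL-Library.Disjoint_Sets"
begin

definition simple_graph :: "nat \<Rightarrow> (nat \<Rightarrow> nat \<Rightarrow> bool) \<Rightarrow> bool" where
  "simple_graph n E \<longleftrightarrow> (\<forall>x y. E x y \<longrightarrow> x < n \<and> y < n) \<and> (\<forall>x y. E x y \<longrightarrow> E y x) \<and> (\<forall>x. \<not> E x x)"

definition common_nbrs :: "nat \<Rightarrow> (nat \<Rightarrow> nat \<Rightarrow> bool) \<Rightarrow> nat \<Rightarrow> nat \<Rightarrow> nat" where
  "common_nbrs n E x y = card {z. z < n \<and> E x z \<and> E y z}"

definition regular_graph :: "nat \<Rightarrow> (nat \<Rightarrow> nat \<Rightarrow> bool) \<Rightarrow> nat \<Rightarrow> bool" where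
  "regular_graph n E k \<longleftrightarrow> (\<forall>x < n. card {y. y < n \<and> E x y} = k)"

definition deza_graph :: "nat \<Rightarrow> (nat \<Rightarrow> nat \<Rightarrow> bool) \<Rightarrow> nat \<Rightarrow> nat \<Rightarrow> nat \<Rightarrow> bool" where
  "deza_graph n E k b a \<longleftrightarrow> simple_graph n E \<and> regular_graph n E k \<and> b \<ge> a
     \<and> (\<exists>x y. x < n \<and> y < n \<and> x \<noteq> y \<and> \<not> E x y)
     \<and> (\<exists>x y. E x y)
     \<and> (\<forall>x y. x < n \<longrightarrow> y < n \<longrightarrow> x \<noteq> y \<longrightarrow>
            common_nbrs n E x y = b \<or> common_nbrs n E x y = a)"

definition child_A :: "nat \<Rightarrow> (nat \<Rightarrow> nat \<Rightarrow> bool) \<Rightarrow> nat \<Rightarrow> nat \<Rightarrow> nat \<Rightarrow> bool" where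
  "child_A n E a x y \<longleftrightarrow> x < n \<and> y < n \<and> x \<noteq> y \<and> common_nbrs n E x y = a"

definition child_B :: "nat \<Rightarrow> (nat \<Rightarrow> nat \<Rightarrow> bool) \<Rightarrow> nat \<Rightarrow> nat \<Rightarrow> nat \<Rightarrow> bool" where
  "child_B n E b x y \<longleftrightarrow> x < n \<and> y < n \<and> x \<noteq> y \<and> common_nbrs n E x y = b"

definition union_of_cliques :: "nat \<Rightarrow> (nat \<Rightarrow> nat \<Rightarrow> bool) \<Rightarrow> bool" where
  "union_of_cliques n R \<longleftrightarrow> (\<exists>P. partition_on {0..<n} P \<and>
      (\<forall>x y. x < n \<longrightarrow> y < n \<longrightarrow> (R x y \<longleftrightarrow> x \<noteq> y \<and> (\<exists>B\<in>P. x \<in> B \<and> y \<in> B))))"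

definition equal_cliques :: "nat \<Rightarrow> (nat \<Rightarrow> nat \<Rightarrow> bool) \<Rightarrow> bool" where
  "equal_cliques n R \<longleftrightarrow> (\<exists>P s. partition_on {0..<n} P \<and> card P \<ge> 2 \<and> s \<ge> 2 \<and> (\<forall>B\<in>P. card B = s) \<and>
      (\<forall>x y. x < n \<longrightarrow> y < n \<longrightarrow> (R x y \<longleftrightarrow> x \<noteq> y \<and> (\<exists>B\<in>P. x \<in> B \<and> y \<in> B))))"

definition equal_complete_multipartite :: "nat \<Rightarrow> (nat \<Rightarrow> nat \<Rightarrow> bool) \<Rightarrow> bool" where
  "equal_complete_multipartite n R \<longleftrightarrow> (\<exists>P s. partition_on {0..<n} P \<and> card P \<ge> 2 \<and> s \<ge> 2 \<and> (\<forall>B\<in>P. card B = s) \<and>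
      (\<forall>x y. x < n \<longrightarrow> y < n \<longrightarrow> (R x y \<longleftrightarrow> \<not> (\<exists>B\<in>P. x \<in> B \<and> y \<in> B))))"

definition complement_graph :: "nat \<Rightarrow> (nat \<Rightarrow> nat \<Rightarrow> bool) \<Rightarrow> nat \<Rightarrow> nat \<Rightarrow> bool" where
  "complement_graph n R x y \<longleftrightarrow> x < n \<and> y < n \<and> x \<noteq> y \<and> \<not> R x y"

definition divisible_design_graph :: "nat \<Rightarrow> (nat \<Rightarrow> nat \<Rightarrow> bool) \<Rightarrow> nat \<Rightarrow> nat \<Rightarrow> nat \<Rightarrow> bool" where
  "divisible_design_graph n E k b a \<longleftrightarrow> deza_graph n E k b a \<and> b > a \<and>
     ((equal_complete_multipartite n (child_A n E a) \<and> equal_cliques n (child_B n E b)) \<or>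
      (equal_complete_multipartite n (child_B n E b) \<and> equal_cliques n (child_A n E a)))"

definition adj_matrix :: "nat \<Rightarrow> (nat \<Rightarrow> nat \<Rightarrow> bool) \<Rightarrow> real mat" where
  "adj_matrix n E = mat n n (\<lambda>(i, j). if E i j then 1 else 0)"

fun walk :: "nat \<Rightarrow> (nat \<Rightarrow> nat \<Rightarrow> bool) \<Rightarrow> nat \<Rightarrow> nat \<Rightarrow> nat \<Rightarrow> bool" where
  "walk n E 0 x y \<longleftrightarrow> x = y"
| "walk n E (Suc i) x y \<longleftrightarrow> (\<exists>z. z < n \<and> E x z \<and> walk n E i z y)"

definition graph_connected :: "nat \<Rightarrow> (nat \<Rightarrow> nat \<Rightarrow> bool) \<Rightarrow> bool" where
  "graph_connected n E \<longleftrightarrow> (\<forall>x y. x < n \<longrightarrow> y < n \<longrightarrow> (\<exists>i. walk n E i x y))"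

definition gdist :: "nat \<Rightarrow> (nat \<Rightarrow> nat \<Rightarrow> bool) \<Rightarrow> nat \<Rightarrow> nat \<Rightarrow> nat" where
  "gdist n E x y = (LEAST i. walk n E i x y)"

definition diameter :: "nat \<Rightarrow> (nat \<Rightarrow> nat \<Rightarrow> bool) \<Rightarrow> nat" where
  "diameter n E = Max {gdist n E x y | x y. x < n \<and> y < n}"

definition distance_regular :: "nat \<Rightarrow> (nat \<Rightarrow> nat \<Rightarrow> bool) \<Rightarrow> nat \<Rightarrow>
    (nat \<Rightarrow> nat) \<Rightarrow> (nat \<Rightarrow> nat) \<Rightarrow> (nat \<Rightarrow> nat) \<Rightarrow> bool" where
  "distance_regular n E d ai bi ci \<longleftrightarrow> graph_connected n E \<and> diameter n E = d \<and>
     (\<forall>i \<le> d. \<forall>x y. x < n \<longrightarrow> y < n \<longrightarrow> gdist n E x y = i \<longrightarrow>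
        card {z. z < n \<and> E y z \<and> gdist n E x z = i + 1} = bi i \<and>
        card {z. z < n \<and> E y z \<and> gdist n E x z = i} = ai i \<and>
        card {z. z < n \<and> E y z \<and> gdist n E x z + 1 = i} = ci i)"

definition antipodal :: "nat \<Rightarrow> (nat \<Rightarrow> nat \<Rightarrow> bool) \<Rightarrow> bool" where
  "antipodal n E \<longleftrightarrow> union_of_cliques n (\<lambda>x y. gdist n E x y = diameter n E)"

end

theory Submission
  imports Defs "Jordan_Normal_Form.Schur_Decomposition"
begin

text \<open>Let \<open>A\<close> be the adjacency matrix and split the vertices into the \<open>p\<close> cliques of size \<open>s\<close> of the
  clique child; two distinct vertices have \<open>\<lambda>\<^sub>1\<close> common neighbours inside a block and \<open>\<lambda>\<^sub>2\<close> across
  blocks. Then \<open>A\<^sup>2\<close> lies in the commutative algebra spanned by \<open>I\<close>, the block indicator matrix and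
  \<open>J\<close>, with eigenvalues \<open>\<theta>\<^sub>0 = k - \<lambda>\<^sub>1\<close>, \<open>\<theta>\<^sub>1 = \<theta>\<^sub>0 + s(\<lambda>\<^sub>1 - \<lambda>\<^sub>2)\<close> and \<open>k\<^sup>2\<close> of multiplicities
  \<open>n - p\<close>, \<open>p - 1\<close> and \<open>1\<close>. Comparing the traces of \<open>A\<^sup>2\<^sup>j\<close> with those dictated by the spectrum gives
  \<open>(n - p)\<theta>\<^sub>0\<^sup>j + (p - 1)\<theta>\<^sub>1\<^sup>j = 2mk\<^sup>j + k\<close> for all \<open>j\<close>, which forces \<open>{\<theta>\<^sub>0, \<theta>\<^sub>1} = {k, 1}\<close>; the
  condition \<open>n | k\<^sup>2 - 1\<close> excludes \<open>\<theta>\<^sub>0 = 1\<close>. Hence \<open>\<lambda>\<^sub>1 = 0\<close>, \<open>n\<lambda>\<^sub>2 = k\<^sup>2 - 1\<close> and \<open>p = k + 1\<close>,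
  and the trace of \<open>A\<^sup>3\<close> shows that no edge lies inside a block. So every vertex has exactly one
  neighbour in each other block: the graph is an antipodal cover of the complete graph on the
  blocks, with distance 1 for edges, 2 across blocks and 3 inside blocks, and \<open>a\<^sub>1 = c\<^sub>2 = \<lambda>\<^sub>2\<close>.\<close>

section \<open>Traces of matrix powers\<close>

definition trace_mat :: "'a::comm_ring_1 mat \<Rightarrow> 'a" where
  "trace_mat A = (\<Sum>i<dim_row A. A $$ (i, i))"

lemma trace_mat_mult_comm:
  fixes A B :: "'a::comm_ring_1 mat"
  assumes "A \<in> carrier_mat n m" "B \<in> carrier_mat m n"
  shows "trace_mat (A * B) = trace_mat (B * A)"
proof -
  have "trace_mat (A * B) = (\<Sum>i<n. \<Sum>j<m. A $$ (i, j) * B $$ (j, i))"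
    using assms by (auto simp: trace_mat_def scalar_prod_def lessThan_atLeast0 intro!: sum.cong)
  also have "\<dots> = (\<Sum>j<m. \<Sum>i<n. B $$ (j, i) * A $$ (i, j))"
    by (subst sum.swap) (simp add: mult.commute)
  also have "\<dots> = trace_mat (B * A)"
    using assms by (auto simp: trace_mat_def scalar_prod_def lessThan_atLeast0 intro!: sum.cong)
  finally show ?thesis .
qed

lemma trace_mat_similar:
  fixes A B :: "'a::comm_ring_1 mat"
  assumes A: "A \<in> carrier_mat n n" and sim: "similar_mat_wit A B P Q"
  shows "trace_mat A = trace_mat B"
proof -
  from similar_mat_witD2[OF A sim] have B: "B \<in> carrier_mat n n"
    and P: "P \<in> carrier_mat n n" and Q: "Q \<in> carrier_mat n n"
    and QP: "Q * P = 1\<^sub>m n" and APBQ: "A = P * B * Q" by auto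
  have "trace_mat A = trace_mat (P * (B * Q))"
    using APBQ P B Q by (simp add: assoc_mult_mat)
  also have "\<dots> = trace_mat (B * Q * P)"
    using P B Q by (simp add: trace_mat_mult_comm[of P n n "B * Q"])
  also have "B * Q * P = B"
    using B P Q QP by (simp add: assoc_mult_mat)
  finally show ?thesis .
qed

lemma upper_triangular_mult_entry:
  fixes A B :: "'a::comm_ring_1 mat"
  assumes A: "A \<in> carrier_mat n n" and B: "B \<in> carrier_mat n n"
    and "upper_triangular A" "upper_triangular B" and "j \<le> i" "i < n"
  shows "(A * B) $$ (i, j) = (if i = j then A $$ (i, i) * B $$ (i, i) else 0)"
proof -
  have "(A * B) $$ (i, j) = (\<Sum>l\<in>{0..<n}. A $$ (i, l) * B $$ (l, j))"
    using assms by (auto simp: scalar_prod_def)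
  also have "\<dots> = (\<Sum>l\<in>{0..<n}. if l = i \<and> i = j then A $$ (i, i) * B $$ (i, i) else 0)"
  proof (rule sum.cong[OF refl])
    fix l assume "l \<in> {0..<n}"
    then show "A $$ (i, l) * B $$ (l, j) = (if l = i \<and> i = j then A $$ (i, i) * B $$ (i, i) else 0)"
      using assms by (cases l i rule: linorder_cases) (auto simp: upper_triangular_def)
  qed
  finally show ?thesis
    using \<open>i < n\<close> by auto
qed

lemma upper_triangular_pow:
  fixes A :: "'a::comm_ring_1 mat"
  assumes A: "A \<in> carrier_mat n n" and ut: "upper_triangular A"
  shows "upper_triangular (A ^\<^sub>m j) \<and> (\<forall>i<n. (A ^\<^sub>m j) $$ (i, i) = A $$ (i, i) ^ j)"
proof (induction j)
  case 0
  then show ?case using A by auto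
next
  case (Suc j)
  have Aj: "A ^\<^sub>m j \<in> carrier_mat n n" using A by simp
  note entry = upper_triangular_mult_entry[OF Aj A conjunct1[OF Suc.IH] ut]
  show ?case
    using entry Suc.IH A by (auto simp: upper_triangular_def)
qed

lemma trace_mat_pow_char_poly:
  fixes A :: "'a::conjugatable_ordered_field mat"
  assumes A: "A \<in> carrier_mat n n" and char_poly: "char_poly A = (\<Prod>e\<leftarrow>es. [:- e, 1:])"
  shows "trace_mat (A ^\<^sub>m j) = (\<Sum>e\<leftarrow>es. e ^ j)"
proof -
  obtain B P Q where schur: "schur_decomposition A es = (B, P, Q)"
    by (cases "schur_decomposition A es") auto
  from schur_decomposition[OF A char_poly schur] have sim: "similar_mat_wit A B P Q"
    and ut: "upper_triangular B" and diag: "diag_mat B = es" by auto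
  have B: "B \<in> carrier_mat n n" using similar_mat_witD2[OF A sim] by auto
  have "trace_mat (A ^\<^sub>m j) = trace_mat (B ^\<^sub>m j)"
    using A similar_mat_wit_pow[OF sim] by (intro trace_mat_similar) auto
  also have "\<dots> = (\<Sum>i<n. B $$ (i, i) ^ j)"
    using upper_triangular_pow[OF B ut] B by (simp add: trace_mat_def)
  also have "\<dots> = (\<Sum>e\<leftarrow>es. e ^ j)"
    unfolding diag[symmetric] using B by (simp add: diag_mat_def sum_list_sum_nth lessThan_atLeast0)
  finally show ?thesis .
qed

lemma pow_mat_mult_exp:
  fixes A :: "'a::semiring_1 mat"
  assumes A: "A \<in> carrier_mat n n"
  shows "A ^\<^sub>m (i * j) = (A ^\<^sub>m i) ^\<^sub>m j"
proof -
  let ?R = "ring_mat TYPE('a) n ()"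
  interpret semiring ?R by (rule semiring_mat)
  have "A ^\<^sub>m (i * j) = A [^]\<^bsub>?R\<^esub> (i * j)"
    by (rule pow_mat_ring_pow[OF A])
  also have "\<dots> = (A ^\<^sub>m i) [^]\<^bsub>?R\<^esub> j"
    using A nat_pow_pow[of A i j] by (simp add: pow_mat_ring_pow[OF A, where b = "()"] ring_mat_simps)
  also have "\<dots> = (A ^\<^sub>m i) ^\<^sub>m j"
    using A by (intro pow_mat_ring_pow[symmetric]) simp
  finally show ?thesis .
qed

section \<open>Partitions into blocks of equal size\<close>

locale uniform_partition =
  fixes n :: nat and P :: "nat set set" and s :: nat
  assumes partition: "partition_on {0..<n} P"
    and card_block: "B \<in> P \<Longrightarrow> card B = s"
    and block_size_pos: "0 < s"
begin

definition same_block :: "nat \<Rightarrow> nat \<Rightarrow> bool" where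
  "same_block x y \<longleftrightarrow> (\<exists>B\<in>P. x \<in> B \<and> y \<in> B)"

definition block_of :: "nat \<Rightarrow> nat set" where
  "block_of x = (THE B. B \<in> P \<and> x \<in> B)"

lemma block_unique: "B \<in> P \<Longrightarrow> C \<in> P \<Longrightarrow> x \<in> B \<Longrightarrow> x \<in> C \<Longrightarrow> B = C"
  using partition_onD2[OF partition] unfolding disjoint_def by blast

lemma block_subset: "B \<in> P \<Longrightarrow> B \<subseteq> {0..<n}"
  using partition_onD1[OF partition] by blast

lemma finite_blocks: "finite P"
  using finite_elements[OF _ partition] by simp

lemma block_of_eq: "B \<in> P \<Longrightarrow> x \<in> B \<Longrightarrow> block_of x = B"
  unfolding block_of_def by (rule the_equality) (auto dest: block_unique)

lemma block_of: "x < n \<Longrightarrow> block_of x \<in> P \<and> x \<in> block_of x"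
proof -
  assume "x < n"
  then have "x \<in> \<Union>P"
    by (simp flip: partition_onD1[OF partition])
  then obtain B where "B \<in> P" "x \<in> B" by blast
  then show ?thesis using block_of_eq by simp
qed

lemma same_block_iff: "x < n \<Longrightarrow> same_block x y \<longleftrightarrow> y \<in> block_of x"
  unfolding same_block_def using block_of block_of_eq by metis

lemma same_block_bounded: "same_block x y \<Longrightarrow> x < n \<and> y < n"
  unfolding same_block_def using block_subset by fastforce

lemma same_block_refl: "x < n \<Longrightarrow> same_block x x"
  using block_of same_block_iff by blast

lemma same_block_commute: "same_block x y \<longleftrightarrow> same_block y x"
  unfolding same_block_def by blast

lemma same_block_trans: "same_block x y \<Longrightarrow> same_block y z \<Longrightarrow> same_block x z"
  unfolding same_block_def by (metis block_unique)

lemma card_same_block: "x < n \<Longrightarrow> card {y. same_block x y} = s"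
  using block_of card_block same_block_iff by simp

lemma card_vertices: "n = card P * s"
proof -
  have "n = (\<Sum>x\<in>{0..<n}. 1)" by simp
  also have "\<dots> = (\<Sum>B\<in>P. \<Sum>x\<in>B. 1)"
    using partition by (rule sum.partition[OF finite_atLeastLessThan])
  also have "\<dots> = card P * s"
    using card_block by simp
  finally show ?thesis .
qed

text \<open>With \<open>I\<close> the identity, \<open>S\<close> the indicator matrix of \<open>same_block\<close> and \<open>J\<close> the all-ones
  matrix, \<open>spectral_mat a b c = a E\<^sub>0 + b E\<^sub>1 + c E\<^sub>2\<close> for the orthogonal idempotents
  \<open>E\<^sub>0 = I - S/s\<close>, \<open>E\<^sub>1 = S/s - J/n\<close>, \<open>E\<^sub>2 = J/n\<close>. Hence these matrices multiply coordinatewise.\<close>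

definition spectral_mat :: "real \<Rightarrow> real \<Rightarrow> real \<Rightarrow> real mat" where
  "spectral_mat a b c = mat n n (\<lambda>(x, y).
     a * of_bool (x = y) + (b - a) / s * of_bool (same_block x y) + (c - b) / n)"

lemma sum_same_block: "x < n \<Longrightarrow> (\<Sum>z<n. of_bool (same_block x z)) = real s"
proof -
  assume "x < n"
  have "{..<n} \<inter> {z. same_block x z} = {z. same_block x z}"
    using same_block_bounded by blast
  then show ?thesis
    using card_same_block[OF \<open>x < n\<close>] by simp
qed

lemma sum_same_block_mult:
  assumes "x < n"
  shows "(\<Sum>z<n. of_bool (same_block x z) * of_bool (same_block z y)) = real s * of_bool (same_block x y)"
proof (cases "same_block x y")
  case True
  then have "same_block x z \<and> same_block z y \<longleftrightarrow> same_block x z" for z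
    using same_block_commute same_block_trans by blast
  then have "(\<Sum>z<n. of_bool (same_block x z) * of_bool (same_block z y)) =
      (\<Sum>z<n. of_bool (same_block x z) :: real)"
    by (intro sum.cong) auto
  then show ?thesis using sum_same_block[OF assms] True by simp
next
  case False
  then have "\<not> (same_block x z \<and> same_block z y)" for z
    using same_block_trans by blast
  then have "of_bool (same_block x z) * of_bool (same_block z y) = (0::real)" for z
    by simp
  then show ?thesis using False by simp
qed

lemma spectral_mat_entry:
  "x < n \<Longrightarrow> y < n \<Longrightarrow> spectral_mat a b c $$ (x, y) =
     a * of_bool (x = y) + (b - a) / s * of_bool (same_block x y) + (c - b) / n"
  by (simp add: spectral_mat_def)

lemma sum_spectral_mat_col:
  assumes "y < n"
  shows "(\<Sum>x<n. spectral_mat a b c $$ (x, y)) = c"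
proof -
  have "(\<Sum>x<n. of_bool (same_block x y)) = real s"
    using sum_same_block[OF assms] by (simp add: same_block_commute)
  then show ?thesis
    using assms block_size_pos
    by (simp add: spectral_mat_entry sum.distrib flip: sum_distrib_left sum_divide_distrib)
qed

lemma sum_same_block_spectral_mat:
  fixes a b c :: real
  assumes x: "x < n" and y: "y < n"
  shows "(\<Sum>z<n. of_bool (same_block x z) * spectral_mat a b c $$ (z, y)) =
    b * of_bool (same_block x y) + s * (c - b) / n"
proof -
  have "(\<Sum>z<n. of_bool (same_block x z) * spectral_mat a b c $$ (z, y)) =
      a * (\<Sum>z<n. of_bool (same_block x z) * of_bool (z = y)) +
      (b - a) / s * (\<Sum>z<n. of_bool (same_block x z) * of_bool (same_block z y)) +
      (c - b) / n * (\<Sum>z<n. of_bool (same_block x z))"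
    unfolding sum_distrib_left sum.distrib[symmetric]
    by (rule sum.cong) (simp_all add: spectral_mat_entry y algebra_simps)
  also have "\<dots> = b * of_bool (same_block x y) + s * (c - b) / n"
    using y block_size_pos sum_same_block_mult[OF x, of y] sum_same_block[OF x] by (simp add: field_simps)
  finally show ?thesis .
qed

lemma sum_spectral_mat_row_mult:
  assumes "x < n"
  shows "(\<Sum>z<n. spectral_mat a b c $$ (x, z) * g z) =
    a * g x + (b - a) / s * (\<Sum>z<n. of_bool (same_block x z) * g z) + (c - b) / n * (\<Sum>z<n. g z)"
proof -
  have "(\<Sum>z<n. spectral_mat a b c $$ (x, z) * g z) =
      (\<Sum>z<n. a * (of_bool (x = z) * g z) + (b - a) / s * (of_bool (same_block x z) * g z) +
        (c - b) / n * g z)"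
    using assms by (intro sum.cong) (simp_all add: spectral_mat_entry algebra_simps)
  also have "\<dots> = a * (\<Sum>z<n. of_bool (x = z) * g z) +
      (b - a) / s * (\<Sum>z<n. of_bool (same_block x z) * g z) + (c - b) / n * (\<Sum>z<n. g z)"
    by (simp only: sum.distrib flip: sum_distrib_left)
  also have "(\<Sum>z<n. of_bool (x = z) * g z) = g x"
    using assms by simp
  finally show ?thesis .
qed

lemma spectral_mat_mult:
  "spectral_mat a b c * spectral_mat a' b' c' = spectral_mat (a * a') (b * b') (c * c')"
proof (rule eq_matI)
  fix x y assume "x < dim_row (spectral_mat (a * a') (b * b') (c * c'))"
    "y < dim_col (spectral_mat (a * a') (b * b') (c * c'))"
  then have x: "x < n" and y: "y < n" by (auto simp: spectral_mat_def)
  have "(spectral_mat a b c * spectral_mat a' b' c') $$ (x, y) =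
      (\<Sum>z<n. spectral_mat a b c $$ (x, z) * spectral_mat a' b' c' $$ (z, y))"
    using x y by (simp add: spectral_mat_def scalar_prod_def lessThan_atLeast0)
  also have "\<dots> = a * spectral_mat a' b' c' $$ (x, y) +
      (b - a) / s * (b' * of_bool (same_block x y) + s * (c' - b') / n) + (c - b) / n * c'"
    unfolding sum_spectral_mat_row_mult[OF x] sum_same_block_spectral_mat[OF x y]
      sum_spectral_mat_col[OF y] ..
  also have "\<dots> = spectral_mat (a * a') (b * b') (c * c') $$ (x, y)"
    using x y block_size_pos by (simp add: spectral_mat_entry field_simps)
  finally show "(spectral_mat a b c * spectral_mat a' b' c') $$ (x, y) =
      spectral_mat (a * a') (b * b') (c * c') $$ (x, y)" .
qed (simp_all add: spectral_mat_def)

lemma spectral_mat_pow: "spectral_mat a b c ^\<^sub>m j = spectral_mat (a ^ j) (b ^ j) (c ^ j)"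
proof (induction j)
  case 0
  show ?case by (rule eq_matI) (simp_all add: spectral_mat_def)
next
  case (Suc j)
  then show ?case by (simp add: spectral_mat_mult mult.commute)
qed

lemma trace_spectral_mat:
  assumes "0 < n"
  shows "trace_mat (spectral_mat a b c) = (real n - card P) * a + (real (card P) - 1) * b + c"
proof -
  have "trace_mat (spectral_mat a b c) = n * (a + (b - a) / s + (c - b) / n)"
    by (simp add: trace_mat_def spectral_mat_def same_block_refl)
  also have "\<dots> = (real n - card P) * a + (real (card P) - 1) * b + c"
    using assms block_size_pos card_vertices by (simp add: field_simps)
  finally show ?thesis .
qed

end

section \<open>Divisible design graphs\<close>

lemma adj_matrix_dim [simp]: "dim_row (adj_matrix n E) = n" "dim_col (adj_matrix n E) = n"
  by (simp_all add: adj_matrix_def)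

lemma adj_matrix_carrier [simp]: "adj_matrix n E \<in> carrier_mat n n"
  by (rule carrier_matI) simp_all

lemma adj_matrix_entry: "x < n \<Longrightarrow> y < n \<Longrightarrow> adj_matrix n E $$ (x, y) = of_bool (E x y)"
  by (simp add: adj_matrix_def)

lemma adj_matrix_square_entry:
  assumes "simple_graph n E" "x < n" "y < n"
  shows "(adj_matrix n E * adj_matrix n E) $$ (x, y) = real (common_nbrs n E x y)"
proof -
  have "(adj_matrix n E * adj_matrix n E) $$ (x, y) =
      (\<Sum>z\<in>{0..<n}. adj_matrix n E $$ (x, z) * adj_matrix n E $$ (z, y))"
    using assms by (auto simp: adj_matrix_def scalar_prod_def intro!: sum.cong)
  also have "\<dots> = (\<Sum>z\<in>{0..<n}. of_bool (E x z \<and> E y z))"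
    using assms by (intro sum.cong) (auto simp: adj_matrix_entry simple_graph_def)
  also have "{0..<n} \<inter> {z. E x z \<and> E y z} = {z. z < n \<and> E x z \<and> E y z}"
    by auto
  then have "(\<Sum>z\<in>{0..<n}. of_bool (E x z \<and> E y z)) = real (common_nbrs n E x y)"
    by (simp add: common_nbrs_def)
  finally show ?thesis .
qed

locale divisible_design = uniform_partition +
  fixes E :: "nat \<Rightarrow> nat \<Rightarrow> bool" and k l1 l2 :: nat
  assumes simple: "simple_graph n E"
    and regular: "regular_graph n E k"
    and common_nbrs_block:
      "x < n \<Longrightarrow> y < n \<Longrightarrow> x \<noteq> y \<Longrightarrow> common_nbrs n E x y = (if same_block x y then l1 else l2)"
begin

abbreviation adj :: "real mat" where "adj \<equiv> adj_matrix n E"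

lemma edge_bounded: "E x y \<Longrightarrow> x < n \<and> y < n"
  using simple by (simp add: simple_graph_def)

lemma edge_commute: "E x y \<longleftrightarrow> E y x"
  using simple by (auto simp: simple_graph_def)

lemma edge_neq: "E x y \<Longrightarrow> x \<noteq> y"
  using simple by (auto simp: simple_graph_def)

lemma degree: "x < n \<Longrightarrow> card {y. y < n \<and> E x y} = k"
  using regular by (simp add: regular_graph_def)

lemma common_nbrs_self: "x < n \<Longrightarrow> common_nbrs n E x x = k"
  using regular by (simp add: regular_graph_def common_nbrs_def)

text \<open>The eigenvalues of \<open>adj\<^sup>2\<close> on the three eigenspaces of \<open>spectral_mat\<close>.\<close>

definition theta0 :: real where "theta0 = real k - real l1"
definition theta1 :: real where "theta1 = theta0 + real s * (real l1 - real l2)"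
definition theta2 :: real where "theta2 = theta1 + real n * real l2"

lemma adj_square: "adj * adj = spectral_mat theta0 theta1 theta2"
proof (rule eq_matI)
  fix x y assume "x < dim_row (spectral_mat theta0 theta1 theta2)"
    "y < dim_col (spectral_mat theta0 theta1 theta2)"
  then have x: "x < n" and y: "y < n" by (auto simp: spectral_mat_def)
  have "(theta1 - theta0) / s = real l1 - real l2" "(theta2 - theta1) / n = real l2"
    using block_size_pos x by (auto simp: theta1_def theta2_def)
  then show "(adj * adj) $$ (x, y) = spectral_mat theta0 theta1 theta2 $$ (x, y)"
    unfolding adj_matrix_square_entry[OF simple x y]
    using x y common_nbrs_self common_nbrs_block same_block_refl
    by (simp add: spectral_mat_entry theta0_def)
qed (simp_all add: spectral_mat_def)

lemma theta2_eq:
  assumes "0 < n"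
  shows "theta2 = real k ^ 2"
proof -
  have col: "(\<Sum>x<n. adj $$ (x, z)) = real k" if "z < n" for z
    using degree[OF that] that by (simp add: adj_matrix_entry edge_commute Int_def)
  have "(\<Sum>x<n. (adj * adj) $$ (x, 0)) = (\<Sum>x<n. \<Sum>z<n. adj $$ (x, z) * adj $$ (z, 0))"
    using assms by (simp add: scalar_prod_def lessThan_atLeast0)
  also have "\<dots> = (\<Sum>z<n. (\<Sum>x<n. adj $$ (x, z)) * adj $$ (z, 0))"
    by (subst sum.swap) (simp add: sum_distrib_right)
  also have "\<dots> = real k * real k"
    using col assms by (simp flip: sum_distrib_left)
  finally show ?thesis
    using sum_spectral_mat_col[OF assms] by (simp add: adj_square power2_eq_square)
qed

lemma adj_pow2: "adj ^\<^sub>m 2 = adj * adj"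
  by (simp add: numeral_2_eq_2)

lemma trace_adj_pow_even:
  assumes "0 < n"
  shows "trace_mat (adj ^\<^sub>m (2 * j)) =
    (real n - card P) * theta0 ^ j + (real (card P) - 1) * theta1 ^ j + real k ^ (2 * j)"
proof -
  have "adj ^\<^sub>m (2 * j) = spectral_mat (theta0 ^ j) (theta1 ^ j) (theta2 ^ j)"
    unfolding pow_mat_mult_exp[OF adj_matrix_carrier] adj_pow2 adj_square spectral_mat_pow ..
  then show ?thesis
    using assms by (simp add: trace_spectral_mat theta2_eq power_mult)
qed

lemma trace_adj_pow3:
  "trace_mat (adj ^\<^sub>m 3) =
     real l2 * n * k - (real l2 - real l1) * (\<Sum>x<n. \<Sum>y<n. of_bool (E x y \<and> same_block x y))"
proof -
  have entry: "(adj ^\<^sub>m 3) $$ (x, x) =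
      (\<Sum>y<n. real l2 * of_bool (E x y) - (real l2 - real l1) * of_bool (E x y \<and> same_block x y))"
    if x: "x < n" for x
  proof -
    have "(adj ^\<^sub>m 3) $$ (x, x) = (\<Sum>y<n. (adj * adj) $$ (x, y) * adj $$ (y, x))"
      using x by (simp add: numeral_3_eq_3 scalar_prod_def lessThan_atLeast0)
    also have "\<dots> = (\<Sum>y<n. real l2 * of_bool (E x y) - (real l2 - real l1) * of_bool (E x y \<and> same_block x y))"
    proof (rule sum.cong[OF refl])
      fix y assume "y \<in> {..<n}"
      then have y: "y < n" by simp
      show "(adj * adj) $$ (x, y) * adj $$ (y, x) =
          real l2 * of_bool (E x y) - (real l2 - real l1) * of_bool (E x y \<and> same_block x y)"
        unfolding adj_matrix_square_entry[OF simple x y] adj_matrix_entry[OF y x]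
        using edge_neq[of x y] common_nbrs_block[OF x y] by (cases "E x y") (auto simp: edge_commute)
    qed
    finally show ?thesis .
  qed
  have "(\<Sum>x<n. \<Sum>y<n. of_bool (E x y)) = (\<Sum>x<n. real k)"
    using degree by (intro sum.cong) (simp_all add: Int_def)
  then show ?thesis
    by (simp add: trace_mat_def entry sum_subtractf sum.distrib flip: sum_distrib_left)
qed

end

lemma divisible_design_of_cliques:
  assumes graph: "simple_graph n E" "regular_graph n E k"
    and common_values: "\<And>x y. x < n \<Longrightarrow> y < n \<Longrightarrow> x \<noteq> y \<Longrightarrow> common_nbrs n E x y \<in> {l1, l2}"
    and cliques: "equal_cliques n (\<lambda>x y. x < n \<and> y < n \<and> x \<noteq> y \<and> common_nbrs n E x y = l1)"
    and "l1 \<noteq> l2"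
  shows "\<exists>P s. divisible_design n P s E k l1 l2 \<and> 2 \<le> card P \<and> 2 \<le> s"
proof -
  obtain P s where P: "partition_on {0..<n} P" "2 \<le> card P" "2 \<le> s" "\<forall>B\<in>P. card B = s"
    and same: "\<forall>x<n. \<forall>y<n. (x \<noteq> y \<and> common_nbrs n E x y = l1) = (x \<noteq> y \<and> (\<exists>B\<in>P. x \<in> B \<and> y \<in> B))"
    using cliques unfolding equal_cliques_def by auto
  interpret uniform_partition n P s
    using P by unfold_locales auto
  have "divisible_design n P s E k l1 l2"
  proof unfold_locales
    fix x y assume "x < n" "y < n" "x \<noteq> y"
    then show "common_nbrs n E x y = (if same_block x y then l1 else l2)"
      using same common_values[of x y] by (auto simp: same_block_def)
  qed (use graph in auto)
  then show ?thesis
    using P by blast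
qed

lemma divisible_design_graph_blocks:
  assumes "divisible_design_graph n E k b a"
  obtains P s l1 l2 where "divisible_design n P s E k l1 l2" "2 \<le> card P" "2 \<le> s" "l1 \<noteq> l2"
proof -
  have deza: "deza_graph n E k b a" and "a \<noteq> b"
    and children: "equal_cliques n (child_B n E b) \<or> equal_cliques n (child_A n E a)"
    using assms unfolding divisible_design_graph_def by auto
  have graph: "simple_graph n E" "regular_graph n E k"
    and common_values: "\<And>x y. x < n \<Longrightarrow> y < n \<Longrightarrow> x \<noteq> y \<Longrightarrow> common_nbrs n E x y \<in> {b, a}"
    using deza unfolding deza_graph_def by auto
  from children show ?thesis
  proof
    assume "equal_cliques n (child_B n E b)"
    then have "equal_cliques n (\<lambda>x y. x < n \<and> y < n \<and> x \<noteq> y \<and> common_nbrs n E x y = b)"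
      unfolding child_B_def .
    moreover have "b \<noteq> a"
      using \<open>a \<noteq> b\<close> by simp
    ultimately obtain P s where "divisible_design n P s E k b a" "2 \<le> card P" "2 \<le> s"
      using divisible_design_of_cliques[OF graph common_values] by blast
    then show ?thesis
      using that \<open>a \<noteq> b\<close> by simp
  next
    assume "equal_cliques n (child_A n E a)"
    then have "equal_cliques n (\<lambda>x y. x < n \<and> y < n \<and> x \<noteq> y \<and> common_nbrs n E x y = a)"
      unfolding child_A_def .
    moreover have "common_nbrs n E x y \<in> {a, b}" if "x < n" "y < n" "x \<noteq> y" for x y
      using common_values[OF that] by blast
    ultimately obtain P s where "divisible_design n P s E k a b" "2 \<le> card P" "2 \<le> s"
      using divisible_design_of_cliques[OF graph] \<open>a \<noteq> b\<close> by blast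
    then show ?thesis
      using that \<open>a \<noteq> b\<close> by simp
  qed
qed

section \<open>Antipodal covers of complete graphs\<close>

locale antipodal_cover = divisible_design +
  assumes l1_eq_0: "l1 = 0" and l2_pos: "0 < l2"
    and no_edge_in_block: "E x y \<Longrightarrow> \<not> same_block x y"
    and card_blocks: "card P = k + 1"
    and degree_pos: "0 < k"
    and nontrivial_blocks: "2 \<le> s"
begin

lemma no_common_nbr_in_block: "same_block x y \<Longrightarrow> x \<noteq> y \<Longrightarrow> \<not> (E x z \<and> E y z)"
proof
  assume xy: "same_block x y" "x \<noteq> y" and z: "E x z \<and> E y z"
  have "card {z. z < n \<and> E x z \<and> E y z} = 0"
    using common_nbrs_block[of x y] xy same_block_bounded l1_eq_0 by (simp add: common_nbrs_def)
  then show False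
    using z edge_bounded by auto
qed

lemma common_nbr_across_blocks:
  assumes "x < n" "y < n" "\<not> same_block x y"
  obtains z where "E x z" "E y z"
proof -
  have "x \<noteq> y"
    using assms same_block_refl by blast
  then have "card {z. z < n \<and> E x z \<and> E y z} = l2"
    using common_nbrs_block assms by (simp add: common_nbrs_def)
  then have "{z. z < n \<and> E x z \<and> E y z} \<noteq> {}"
    using l2_pos by (metis card.empty less_irrefl)
  then show ?thesis
    using that by blast
qed

lemma nbr_in_block_unique: "E y z \<Longrightarrow> E y w \<Longrightarrow> same_block z w \<Longrightarrow> z = w"
  using no_common_nbr_in_block edge_commute by blast

text \<open>The \<open>k\<close> neighbours of a vertex lie in pairwise distinct blocks other than its own, and
  there are exactly \<open>k\<close> such blocks.\<close>

lemma nbr_in_block: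
  assumes y: "y < n" and B: "B \<in> P" and "y \<notin> B"
  obtains z where "E y z" "z \<in> B"
proof -
  let ?N = "{z. z < n \<and> E y z}"
  have into: "block_of ` ?N \<subseteq> P - {block_of y}"
  proof
    fix C assume "C \<in> block_of ` ?N"
    then obtain z where z: "z < n" "E y z" "C = block_of z" by blast
    then have "z \<notin> block_of y"
      using no_edge_in_block same_block_iff[OF y] by blast
    then show "C \<in> P - {block_of y}"
      using z block_of[OF z(1)] by auto
  qed
  have "inj_on block_of ?N"
  proof (rule inj_onI)
    fix z w assume "z \<in> ?N" "w \<in> ?N" "block_of z = block_of w"
    then show "z = w"
      using block_of[of w] same_block_iff[of z w] nbr_in_block_unique by auto
  qed
  then have "card (block_of ` ?N) = card (P - {block_of y})"
    using degree[OF y] card_blocks block_of[OF y] finite_blocks by (simp add: card_image)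
  then have "block_of ` ?N = P - {block_of y}"
    using into finite_blocks by (simp add: card_subset_eq)
  moreover have "B \<noteq> block_of y"
    using block_of[OF y] \<open>y \<notin> B\<close> by blast
  ultimately obtain z where "z < n" "E y z" "B = block_of z"
    using B by blast
  then show ?thesis
    using that block_of by blast
qed

definition cover_dist :: "nat \<Rightarrow> nat \<Rightarrow> nat" where
  "cover_dist x y = (if x = y then 0 else if E x y then 1 else if same_block x y then 3 else 2)"

lemma walk_1: "walk n E 1 x y \<longleftrightarrow> E x y"
  using edge_bounded by auto

lemma walk_2: "walk n E 2 x y \<longleftrightarrow> (\<exists>z. E x z \<and> E z y)"
  using edge_bounded by (auto simp: numeral_2_eq_2)

lemma walk_cover_dist:
  assumes x: "x < n" and y: "y < n"
  shows "walk n E (cover_dist x y) x y"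
proof -
  consider "x = y" | "E x y" | "x \<noteq> y" "\<not> E x y" "\<not> same_block x y"
    | "x \<noteq> y" "\<not> E x y" "same_block x y"
    by blast
  then show ?thesis
  proof cases
    case 3
    then obtain z where "E x z" "E y z"
      using common_nbr_across_blocks[OF x y] by blast
    then show ?thesis
      using 3 walk_2 edge_commute by (auto simp: cover_dist_def)
  next
    case 4
    have "{u. u < n \<and> E x u} \<noteq> {}"
      using degree[OF x] degree_pos by force
    then obtain u where u: "u < n" "E x u" by blast
    then have "\<not> same_block u y"
      using 4 no_edge_in_block same_block_commute same_block_trans by blast
    then obtain v where v: "E u v" "E y v"
      using common_nbr_across_blocks[OF u(1) y] by blast
    have "walk n E 3 x y"
      using u v edge_bounded edge_commute by (simp add: numeral_3_eq_3) blast
    then show ?thesis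
      using 4 by (simp add: cover_dist_def)
  qed (auto simp: cover_dist_def walk_1 edge_bounded)
qed

lemma cover_dist_le_walk:
  assumes "walk n E i x y"
  shows "cover_dist x y \<le> i"
proof -
  consider "i = 0" | "i = 1" | "i = 2" | "3 \<le> i"
    by linarith
  then show ?thesis
  proof cases
    case 3
    then obtain z where "E x z" "E z y"
      using assms walk_2 by blast
    then show ?thesis
      using 3 no_common_nbr_in_block edge_commute by (auto simp: cover_dist_def)
  qed (use assms walk_1 in \<open>auto simp: cover_dist_def\<close>)
qed

lemma gdist_eq_cover_dist: "x < n \<Longrightarrow> y < n \<Longrightarrow> gdist n E x y = cover_dist x y"
  unfolding gdist_def by (rule Least_equality) (auto intro: walk_cover_dist cover_dist_le_walk)

lemma connected: "graph_connected n E"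
  unfolding graph_connected_def using walk_cover_dist by blast

lemma diameter_eq_3: "diameter n E = 3"
proof -
  obtain B where B: "B \<in> P"
    using card_blocks by fastforce
  then obtain x y where "x \<in> B" "y \<in> B" "x \<noteq> y"
    using card_block[OF B] nontrivial_blocks by (metis card_le_Suc0_iff_eq not_less_eq_eq numeral_2_eq_2
        card.infinite zero_less_numeral not_le)
  then have xy: "x < n" "y < n" "cover_dist x y = 3"
    using B block_subset no_edge_in_block by (fastforce simp: cover_dist_def same_block_def)+
  have "{gdist n E x y | x y. x < n \<and> y < n} \<subseteq> {..3}"
    using gdist_eq_cover_dist by (auto simp: cover_dist_def)
  moreover have "3 \<in> {gdist n E x y | x y. x < n \<and> y < n}"
    using xy gdist_eq_cover_dist by force
  ultimately show ?thesis
    unfolding diameter_def by (intro Max_eqI) (auto intro: finite_subset)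
qed

lemma antipodal: "antipodal n E"
  unfolding antipodal_def union_of_cliques_def diameter_eq_3
proof (intro exI conjI allI impI)
  show "partition_on {0..<n} P" by (rule partition)
  fix x y assume "x < n" "y < n"
  then show "(gdist n E x y = 3) = (x \<noteq> y \<and> (\<exists>B\<in>P. x \<in> B \<and> y \<in> B))"
    using no_edge_in_block by (auto simp: gdist_eq_cover_dist cover_dist_def same_block_def)
qed

definition nbrs_at :: "nat \<Rightarrow> nat \<Rightarrow> nat \<Rightarrow> nat set" where
  "nbrs_at x y j = {z. E y z \<and> cover_dist x z = j}"

lemma finite_nbrs_at: "finite (nbrs_at x y j)"
  by (rule finite_subset[of _ "{..<n}"]) (auto simp: nbrs_at_def dest: edge_bounded)

lemma card_nbrs_at_0: "x < n \<Longrightarrow> card (nbrs_at x y 0) = of_bool (E y x)"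
proof -
  assume "x < n"
  have "nbrs_at x y 0 = (if E y x then {x} else {})"
    by (auto simp: nbrs_at_def cover_dist_def)
  then show ?thesis by simp
qed

lemma card_nbrs_at_1:
  assumes "x < n" "y < n"
  shows "card (nbrs_at x y 1) = (if x = y then k else if same_block x y then 0 else l2)"
proof -
  have "nbrs_at x y 1 = {z. z < n \<and> E x z \<and> E y z}"
    by (auto simp: nbrs_at_def cover_dist_def edge_commute dest: edge_bounded edge_neq)
  then show ?thesis
    using assms common_nbrs_self common_nbrs_block l1_eq_0 by (simp add: common_nbrs_def)
qed

lemma card_nbrs_at_3:
  assumes x: "x < n" and y: "y < n"
  shows "card (nbrs_at x y 3) = (if same_block x y \<or> E y x then 0 else 1)"
proof -
  have nbrs3: "nbrs_at x y 3 = {z. E y z \<and> z \<noteq> x \<and> same_block x z}"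
    using no_edge_in_block by (auto simp: nbrs_at_def cover_dist_def)
  consider "same_block x y" | "\<not> same_block x y" "E y x" | "\<not> same_block x y" "\<not> E y x"
    by blast
  then show ?thesis
  proof cases
    case 1
    have "\<not> (E y z \<and> same_block x z)" for z
      using 1 no_edge_in_block[of y z] same_block_trans[of y x z] same_block_commute by blast
    then have "nbrs_at x y 3 = {}"
      using nbrs3 by blast
    then show ?thesis using 1 by simp
  next
    case 2
    then have "nbrs_at x y 3 = {}"
      using nbrs3 nbr_in_block_unique by blast
    then show ?thesis using 2 by simp
  next
    case 3
    have "y \<notin> block_of x"
      using 3 same_block_iff[OF x] by blast
    then obtain z where z: "E y z" "z \<in> block_of x"
      using nbr_in_block[OF y] block_of[OF x] by blast
    have "w = z" if "w \<in> nbrs_at x y 3" for w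
    proof -
      have "E y w" "same_block z w"
        using that z nbrs3 same_block_iff[OF x] same_block_commute same_block_trans by blast+
      then show "w = z"
        using z nbr_in_block_unique by blast
    qed
    moreover have "z \<in> nbrs_at x y 3"
      using 3 z nbrs3 same_block_iff[OF x] by auto
    ultimately have "nbrs_at x y 3 = {z}"
      by blast
    then show ?thesis using 3 by simp
  qed
qed

lemma card_nbrs_at_sum:
  assumes "y < n"
  shows "card (nbrs_at x y 0) + card (nbrs_at x y 1) + card (nbrs_at x y 2) + card (nbrs_at x y 3) = k"
proof -
  have "{z. z < n \<and> E y z} = nbrs_at x y 0 \<union> nbrs_at x y 1 \<union> nbrs_at x y 2 \<union> nbrs_at x y 3"
    by (auto simp: nbrs_at_def cover_dist_def dest: edge_bounded)
  then have "k = card (nbrs_at x y 0 \<union> nbrs_at x y 1 \<union> nbrs_at x y 2 \<union> nbrs_at x y 3)"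
    using degree[OF assms] by simp
  also have "\<dots> = card (nbrs_at x y 0) + card (nbrs_at x y 1) + card (nbrs_at x y 2) + card (nbrs_at x y 3)"
    by (subst card_Un_disjoint, simp_all add: finite_nbrs_at, (auto simp: nbrs_at_def)[1])+
  finally show ?thesis ..
qed

lemma nbrs_at_beyond_3: "3 < j \<Longrightarrow> nbrs_at x y j = {}"
  by (auto simp: nbrs_at_def cover_dist_def)

text \<open>The entry \<open>c\<^sub>0 = 0\<close> matches \<open>card (nbrs_at x x (0 - 1)) = card (nbrs_at x x 0) = 0\<close> under
  truncated subtraction.\<close>

lemma intersection_numbers:
  assumes x: "x < n" and y: "y < n" and i: "cover_dist x y = i"
  shows "card (nbrs_at x y (i + 1)) = [k, k - l2 - 1, 1, 0] ! i"
    and "card (nbrs_at x y i) = [0, l2, k - l2 - 1, 0] ! i"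
    and "card (nbrs_at x y (i - 1)) = [0, 1, l2, k] ! i"
  using card_nbrs_at_0[OF x, of y] card_nbrs_at_1[OF x y] card_nbrs_at_3[OF x y]
    card_nbrs_at_sum[OF y, of x] i edge_commute[of x y] no_edge_in_block[of x y]
  by (auto simp: cover_dist_def nbrs_at_beyond_3 numeral_2_eq_2 numeral_3_eq_3 split: if_splits)

theorem distance_regular_antipodal:
  "distance_regular n E 3 (\<lambda>i. [0, l2, k - l2 - 1, 0] ! i) (\<lambda>i. [k, k - l2 - 1, 1, 0] ! i)
     (\<lambda>i. [0, 1, l2, k] ! i) \<and> antipodal n E"
proof -
  have layer: "{z. z < n \<and> E y z \<and> gdist n E x z = j} = nbrs_at x y j" if "x < n" for x y j
    using that by (auto simp: nbrs_at_def gdist_eq_cover_dist dest: edge_bounded)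
  have "{z. z < n \<and> E y z \<and> gdist n E x z + 1 = i} = nbrs_at x y (i - 1)"
    if "x < n" "y < n" "gdist n E x y = i" for x y i
    using that edge_neq
    by (cases i) (auto simp: layer nbrs_at_def cover_dist_def gdist_eq_cover_dist split: if_splits)
  then show ?thesis
    using connected diameter_eq_3 antipodal intersection_numbers
    by (auto simp: distance_regular_def layer gdist_eq_cover_dist)
qed

end

section \<open>The spectral argument\<close>

lemma dvd_square_minus_one:
  fixes d k :: int
  assumes "d dvd k" "d dvd k ^ 2 - 1"
  shows "d dvd 1"
proof -
  have "d dvd k ^ 2"
    using assms(1) by (simp add: power2_eq_square)
  then have "d dvd k ^ 2 - (k ^ 2 - 1)"
    using assms(2) by (rule dvd_diff)
  then show ?thesis
    by simp
qed

lemma power_sums_determine_nodes: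
  fixes \<alpha> \<beta> \<gamma> \<delta> x y u v :: real
  assumes "0 < \<alpha>" "0 < \<beta>"
    and sums: "\<And>j. j \<le> 4 \<Longrightarrow> \<alpha> * x ^ j + \<beta> * y ^ j = \<gamma> * u ^ j + \<delta> * v ^ j"
  shows "x \<in> {u, v} \<and> y \<in> {u, v}"
proof -
  \<comment> \<open>Evaluate the weighted sums on the quartic \<open>q\<close>, which is nonnegative and vanishes at \<open>u\<close>, \<open>v\<close>.\<close>
  define q where "q t = ((t - u) * (t - v)) ^ 2" for t
  define moment where "moment f = f 4 - 2 * (u + v) * f 3 + (u\<^sup>2 + 4 * u * v + v\<^sup>2) * f 2
    - 2 * u * v * (u + v) * f 1 + u\<^sup>2 * v\<^sup>2 * f 0" for f :: "nat \<Rightarrow> real"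
  have q_moment: "a * q t + b * q t' = moment (\<lambda>j. a * t ^ j + b * t' ^ j)" for a b t t'
    by (simp add: q_def moment_def algebra_simps eval_nat_numeral)
  have "moment (\<lambda>j. \<alpha> * x ^ j + \<beta> * y ^ j) = moment (\<lambda>j. \<gamma> * u ^ j + \<delta> * v ^ j)"
    unfolding moment_def using sums[of 0] sums[of 1] sums[of 2] sums[of 3] sums[of 4] by simp
  then have "\<alpha> * q x + \<beta> * q y = \<gamma> * q u + \<delta> * q v"
    by (simp only: q_moment)
  also have "\<dots> = 0"
    by (simp add: q_def)
  finally have "\<alpha> * q x = 0 \<and> \<beta> * q y = 0"
    using assms(1,2) by (smt (verit) q_def mult_nonneg_nonneg zero_le_power2)
  then show ?thesis
    using assms(1,2) by (simp add: q_def)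
qed

locale ddg_spectrum = divisible_design +
  fixes m :: nat
  assumes two_blocks: "2 \<le> card P" and nontrivial_blocks: "2 \<le> s"
    and l1_neq_l2: "l1 \<noteq> l2"
    and char_poly_adj: "char_poly (adj_matrix n E) =
      [:- real k, 1:] * [:- sqrt (real k), 1:] ^ m * [:1, 1:] ^ k * [:sqrt (real k), 1:] ^ m"
    and order_dvd: "int n dvd int k ^ 2 - 1"
begin

definition eigenvalues :: "real list" where
  "eigenvalues = real k # replicate m (sqrt (real k)) @ replicate k (- 1) @ replicate m (- sqrt (real k))"

lemma trace_adj_pow:
  "trace_mat (adj ^\<^sub>m j) = real k ^ j + m * sqrt (real k) ^ j + k * (- 1) ^ j + m * (- sqrt (real k)) ^ j"
proof -
  have "char_poly adj = (\<Prod>e\<leftarrow>eigenvalues. [:- e, 1:])"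
    unfolding char_poly_adj eigenvalues_def
    by (simp only: list.map map_append prod_list.Cons prod_list.append map_replicate
        prod_list_replicate minus_minus mult.assoc)
  from trace_mat_pow_char_poly[OF adj_matrix_carrier this] show ?thesis
    by (simp add: eigenvalues_def sum_list_replicate)
qed

lemma order_eq: "n = 2 * m + k + 1"
  using trace_adj_pow[of 0] by (simp add: trace_mat_def)

lemma order_pos: "0 < n"
  by (simp add: order_eq)

lemma even_power_sums:
  "(real n - card P) * theta0 ^ j + (real (card P) - 1) * theta1 ^ j =
    2 * real m * real k ^ j + real k * 1 ^ j"
proof -
  have "sqrt (real k) ^ (2 * j) = real k ^ j" "(- sqrt (real k)) ^ (2 * j) = real k ^ j"
    "(- 1 :: real) ^ (2 * j) = 1"
    by (simp_all add: power_mult)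
  then have "trace_mat (adj ^\<^sub>m (2 * j)) = real k ^ (2 * j) + 2 * m * real k ^ j + k"
    unfolding trace_adj_pow by simp
  then show ?thesis
    using trace_adj_pow_even[OF order_pos, of j] by simp
qed

lemma theta_cases: "theta0 \<in> {real k, 1} \<and> theta1 \<in> {real k, 1} \<and> theta0 \<noteq> theta1"
proof -
  have "real n - card P = real (card P) * (real s - 1)"
    using card_vertices by (simp add: algebra_simps)
  then have "real n - card P > 0"
    using nontrivial_blocks two_blocks by simp
  moreover have "real (card P) - 1 > 0"
    using two_blocks by simp
  moreover have "theta0 \<noteq> theta1"
    using l1_neq_l2 block_size_pos by (simp add: theta1_def)
  ultimately show ?thesis
    using power_sums_determine_nodes[OF _ _ even_power_sums] by simp
qed

lemma theta_values: "theta0 = real k \<and> theta1 = 1"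
proof (rule ccontr)
  assume "\<not> (theta0 = real k \<and> theta1 = 1)"
  then have t0: "theta0 = 1" and t1: "theta1 = real k" and "k \<noteq> 1"
    using theta_cases by auto
  have "real s * real l2 = (real s - 1) * (real k - 1)"
    using t0 t1 by (simp add: theta0_def theta1_def algebra_simps)
  then have "real (card P) * (real s - 1) * (real k - 1) = real (card P) * (real s * real l2)"
    by simp
  also have "\<dots> = real n * real l2"
    using card_vertices by simp
  also have "\<dots> = real k * (real k - 1)"
    using t1 theta2_eq[OF order_pos] by (simp add: theta2_def power2_eq_square algebra_simps)
  finally have "real (card P) * (real s - 1) * (real k - 1) = real k * (real k - 1)" .
  with \<open>k \<noteq> 1\<close> have "real (card P) * (real s - 1) = real k"
    by simp
  then have "real (card P * (s - 1)) = real k"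
    using nontrivial_blocks by (simp add: of_nat_diff)
  then have "card P * (s - 1) = k"
    by (simp only: of_nat_eq_iff)
  then have "int (card P) dvd int k"
    by (metis dvd_triv_left of_nat_mult)
  moreover have "int (card P) dvd int k ^ 2 - 1"
    using card_vertices order_dvd dvd_trans[of "int (card P)" "int n"] by simp
  ultimately have "int (card P) dvd 1"
    by (rule dvd_square_minus_one)
  then show False
    using two_blocks by simp
qed

lemma l1_eq_0: "l1 = 0"
  using theta_values by (simp add: theta0_def)

lemma block_param: "s * l2 + 1 = k"
  unfolding of_nat_eq_iff[where 'a = real, symmetric]
  using theta_values[unfolded theta1_def theta0_def] l1_eq_0 by (simp add: algebra_simps)

lemma order_param: "n * l2 + 1 = k ^ 2"
  unfolding of_nat_eq_iff[where 'a = real, symmetric]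
  using theta_values theta2_eq[OF order_pos] by (simp add: theta2_def algebra_simps)

lemma l2_pos: "0 < l2"
  using l1_neq_l2 l1_eq_0 by simp

lemma card_blocks: "card P = k + 1"
proof -
  have sl2: "real s * real l2 = real k - 1" and nl2: "real n * real l2 = real k ^ 2 - 1"
    using block_param order_param by (simp_all flip: of_nat_mult of_nat_power add: algebra_simps)
  have "real (card P) * (real k - 1) = real n * real l2"
    using card_vertices by (simp flip: sl2)
  also have "\<dots> = (real k + 1) * (real k - 1)"
    unfolding nl2 by (simp add: power2_eq_square algebra_simps)
  finally have "real (card P) * (real k - 1) = (real k + 1) * (real k - 1)" .
  moreover have "real k \<noteq> 1"
    using block_param nontrivial_blocks l2_pos by (cases l2) auto
  ultimately show ?thesis
    by simp
qed

lemma no_edge_in_block: "E x y \<Longrightarrow> \<not> same_block x y"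
proof -
  have nl2: "real n * real l2 = real k ^ 2 - 1"
    using order_param by (simp flip: of_nat_mult of_nat_power add: algebra_simps)
  have "real l2 * n * k = (real n * real l2) * k"
    by simp
  also have "\<dots> = real k ^ 3 - k"
    unfolding nl2 by (simp add: power3_eq_cube power2_eq_square algebra_simps)
  also have "\<dots> = trace_mat (adj ^\<^sub>m 3)"
    unfolding trace_adj_pow by simp
  finally have "(\<Sum>x<n. \<Sum>y<n. of_bool (E x y \<and> same_block x y) :: real) = 0"
    using trace_adj_pow3 l1_eq_0 l2_pos by simp
  then have "{..<n} \<inter> {y. E x y \<and> same_block x y} = {}" if "x < n" for x
    using that by (simp add: sum_nonneg_eq_0_iff)
  then show "E x y \<Longrightarrow> \<not> same_block x y"
    using edge_bounded by blast
qed

lemma is_antipodal_cover: "antipodal_cover n P s E k l1 l2"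
proof unfold_locales
  show "0 < k"
    using card_blocks two_blocks by simp
qed (use l1_eq_0 l2_pos no_edge_in_block card_blocks nontrivial_blocks in auto)

end

theorem corollary2:
  fixes n k b a m :: nat and E :: "nat \<Rightarrow> nat \<Rightarrow> bool"
  assumes "divisible_design_graph n E k b a"
    and "char_poly (adj_matrix n E) =
           [:- real k, 1:] * [:- sqrt (real k), 1:] ^ m * [:1, 1:] ^ k * [:sqrt (real k), 1:] ^ m"
    and "int n dvd int k ^ 2 - 1"
  shows "\<exists>ai bi ci. distance_regular n E 3 ai bi ci \<and> antipodal n E \<and>
           ai 1 = (k ^ 2 - 1) div n \<and> ci 2 = (k ^ 2 - 1) div n"
proof -
  obtain P s l1 l2 where "divisible_design n P s E k l1 l2" "2 \<le> card P" "2 \<le> s" "l1 \<noteq> l2"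
    using divisible_design_graph_blocks[OF assms(1)] .
  then interpret ddg_spectrum n P s E k l1 l2 m
    using assms(2,3) by (simp add: ddg_spectrum_def ddg_spectrum_axioms_def)
  have "(k ^ 2 - 1) div n = l2"
    using order_param order_pos by (simp flip: order_param)
  then show ?thesis
    using antipodal_cover.distance_regular_antipodal[OF is_antipodal_cover] by fastforce
qed

end
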